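(* There is a polynomial $f$ such that every satisfiable $\mathrm{LTL_{PSL}}$ formula $\varphi$ is satisfied in an $\mathrm{SLTL}$ model $M=(\Pi,\lambda)$ (i.e. $M,\sigma,0\models\varphi$ for some $\sigma\in\Pi$) with $|\Pi|\le f(|\varphi|)$, where $|\varphi|$ is the size of $\varphi$.
   Context: Fix countably infinite sets $\mathcal{P}$ of propositional variables and $\mathcal{S}$ of standpoint symbols containing a universal symbol $*$. SLTL formulae: $\varphi ::= p \mid s \preceq s' \mid \neg\varphi \mid \varphi\wedge\varphi \mid \Diamond_s\varphi \mid \Box_s\varphi \mid X\varphi \mid \varphi\,U\,\varphi$. A model is $M=(\Pi,\lambda)$ with $\Pi\neq\emptyset$ a set of traces $\sigma:\mathbb{N}\to 2^{\mathcal{P}}$ and $\lambda:\mathcal{S}\to 2^{\Pi}\setminus\{\emptyset\}$ with $\lambda( * )=\Pi$. Semantics: $M,\sigma,i\models p$ iff $p\in\sigma(i)$; $M,\sigma,i\models s\preceq s'$ iff $\lambda(s)\subseteq\lambda(s')$; Boolean clauses as usual; $\Diamond_s\psi$ (resp. $\Box_s\psi$) holds at $\sigma,i$ iff $\psi$ holds at $\sigma',i$ for some (resp. all) $\sigma'\in\lambda(s)$; $X\psi$ holds at $\sigma,i$ iff $\psi$ holds at $\sigma,i+1$; $\psi U\chi$ holds at $\sigma,i$ iff $\chi$ holds at $\sigma,i'$ for some $i'\ge i$ and $\psi$ holds at $\sigma,i''$ for all $i\le i''<i'$. $\varphi$ is satisfiable iff $M,\sigma,0\models\varphi$ for some $M=(\Pi,\lambda)$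 and $\sigma\in\Pi$. $\mathrm{LTL_{PSL}}$ is the fragment of SLTL consisting of formulae in which no temporal connective ($X$ or $U$) occurs in the scope of a standpoint modality $\Diamond_s$ or $\Box_s$. *)

theory Defs
  imports Main "HOL-Computational_Algebra.Polynomial"
begin

datatype stp = Star | Sym nat

datatype sltl =
    Prop nat
  | Sharper stp stp
  | Neg sltl
  | Conj sltl sltl
  | Dia stp sltl
  | Box stp sltl
  | Next sltl
  | Until sltl sltl

type_synonym trace = "nat \<Rightarrow> nat set"

definition sltl_model :: "trace set \<Rightarrow> (stp \<Rightarrow> trace set) \<Rightarrow> bool" where
  "sltl_model \<Pi> lam \<longleftrightarrow> \<Pi> \<noteq> {} \<and> (\<forall>s. lam s \<subseteq> \<Pi> \<and> lam s \<noteq> {}) \<and> lam Star = \<Pi>"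

fun sat :: "trace set \<Rightarrow> (stp \<Rightarrow> trace set) \<Rightarrow> trace \<Rightarrow> nat \<Rightarrow> sltl \<Rightarrow> bool" where
  "sat \<Pi> lam \<sigma> i (Prop p) = (p \<in> \<sigma> i)"
| "sat \<Pi> lam \<sigma> i (Sharper s s') = (lam s \<subseteq> lam s')"
| "sat \<Pi> lam \<sigma> i (Neg \<phi>) = (\<not> sat \<Pi> lam \<sigma> i \<phi>)"
| "sat \<Pi> lam \<sigma> i (Conj \<phi> \<psi>) = (sat \<Pi> lam \<sigma> i \<phi> \<and> sat \<Pi> lam \<sigma> i \<psi>)"
| "sat \<Pi> lam \<sigma> i (Dia s \<phi>) = (\<exists>\<sigma>'\<in>lam s. sat \<Pi> lam \<sigma>' i \<phi>)"
| "sat \<Pi> lam \<sigma> i (Box s \<phi>) = (\<forall>\<sigma>'\<in>lam s. sat \<Pi> lam \<sigma>' i \<phi>)"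
| "sat \<Pi> lam \<sigma> i (Next \<phi>) = sat \<Pi> lam \<sigma> (Suc i) \<phi>"
| "sat \<Pi> lam \<sigma> i (Until \<phi> \<psi>) =
     (\<exists>i'\<ge>i. sat \<Pi> lam \<sigma> i' \<psi> \<and> (\<forall>i''. i \<le> i'' \<and> i'' < i' \<longrightarrow> sat \<Pi> lam \<sigma> i'' \<phi>))"

definition satisfiable :: "sltl \<Rightarrow> bool" where
  "satisfiable \<phi> \<longleftrightarrow> (\<exists>\<Pi> lam \<sigma>. sltl_model \<Pi> lam \<and> \<sigma> \<in> \<Pi> \<and> sat \<Pi> lam \<sigma> 0 \<phi>)"

fun fsize :: "sltl \<Rightarrow> nat" where
  "fsize (Prop p) = 1"
| "fsize (Sharper s s') = 1"
| "fsize (Neg \<phi>) = Suc (fsize \<phi>)"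
| "fsize (Conj \<phi> \<psi>) = Suc (fsize \<phi> + fsize \<psi>)"
| "fsize (Dia s \<phi>) = Suc (fsize \<phi>)"
| "fsize (Box s \<phi>) = Suc (fsize \<phi>)"
| "fsize (Next \<phi>) = Suc (fsize \<phi>)"
| "fsize (Until \<phi> \<psi>) = Suc (fsize \<phi> + fsize \<psi>)"

fun temporal_free :: "sltl \<Rightarrow> bool" where
  "temporal_free (Prop p) = True"
| "temporal_free (Sharper s s') = True"
| "temporal_free (Neg \<phi>) = temporal_free \<phi>"
| "temporal_free (Conj \<phi> \<psi>) = (temporal_free \<phi> \<and> temporal_free \<psi>)"
| "temporal_free (Dia s \<phi>) = temporal_free \<phi>"
| "temporal_free (Box s \<phi>) = temporal_free \<phi>"
| "temporal_free (Next \<phi>) = False"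
| "temporal_free (Until \<phi> \<psi>) = False"

fun ltl_psl :: "sltl \<Rightarrow> bool" where
  "ltl_psl (Prop p) = True"
| "ltl_psl (Sharper s s') = True"
| "ltl_psl (Neg \<phi>) = ltl_psl \<phi>"
| "ltl_psl (Conj \<phi> \<psi>) = (ltl_psl \<phi> \<and> ltl_psl \<psi>)"
| "ltl_psl (Dia s \<phi>) = temporal_free \<phi>"
| "ltl_psl (Box s \<phi>) = temporal_free \<phi>"
| "ltl_psl (Next \<phi>) = ltl_psl \<phi>"
| "ltl_psl (Until \<phi> \<psi>) = (ltl_psl \<phi> \<and> ltl_psl \<psi>)"

end

theory Submission
  imports Defs "HOL-Library.Countable"
begin

(* Fix a model of \<phi> with designated trace \<sigma>. For every standpoint s that is * or occurs
   in \<phi>, every subformula \<psi> of \<phi> and every truth value b, create one new trace that at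
   each time i separately copies the state of some trace of \<lambda>(s) on which \<psi> has value b
   at time i, if there is one; one more new trace copies \<sigma>. Since no temporal connective
   occurs below a modality, a modal subformula at time i only inspects the time-i states of
   traces, and the copied witnesses realise every truth value it can take. Putting a new
   trace into every standpoint that contains the standpoint it was drawn from preserves the
   sharpening statements. This yields at most 2 |\<phi>| (2 |\<phi>| + 1) + 1 traces. *)

fun subformulas :: "sltl \<Rightarrow> sltl set" where
  "subformulas (Prop p) = {Prop p}"
| "subformulas (Sharper s s') = {Sharper s s'}"
| "subformulas (Neg \<phi>) = insert (Neg \<phi>) (subformulas \<phi>)"
| "subformulas (Conj \<phi> \<psi>) = insert (Conj \<phi> \<psi>) (subformulas \<phi> \<union> subformulas \<psi>)"
| "subformulas (Dia s \<phi>) = insert (Dia s \<phi>) (subformulas \<phi>)"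
| "subformulas (Box s \<phi>) = insert (Box s \<phi>) (subformulas \<phi>)"
| "subformulas (Next \<phi>) = insert (Next \<phi>) (subformulas \<phi>)"
| "subformulas (Until \<phi> \<psi>) = insert (Until \<phi> \<psi>) (subformulas \<phi> \<union> subformulas \<psi>)"

fun standpoints :: "sltl \<Rightarrow> stp set" where
  "standpoints (Prop p) = {}"
| "standpoints (Sharper s s') = {s, s'}"
| "standpoints (Neg \<phi>) = standpoints \<phi>"
| "standpoints (Conj \<phi> \<psi>) = standpoints \<phi> \<union> standpoints \<psi>"
| "standpoints (Dia s \<phi>) = insert s (standpoints \<phi>)"
| "standpoints (Box s \<phi>) = insert s (standpoints \<phi>)"
| "standpoints (Next \<phi>) = standpoints \<phi>"
| "standpoints (Until \<phi> \<psi>) = standpoints \<phi> \<union> standpoints \<psi>"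

fun prop_bound :: "sltl \<Rightarrow> nat" where
  "prop_bound (Prop p) = Suc p"
| "prop_bound (Sharper s s') = 0"
| "prop_bound (Neg \<phi>) = prop_bound \<phi>"
| "prop_bound (Conj \<phi> \<psi>) = max (prop_bound \<phi>) (prop_bound \<psi>)"
| "prop_bound (Dia s \<phi>) = prop_bound \<phi>"
| "prop_bound (Box s \<phi>) = prop_bound \<phi>"
| "prop_bound (Next \<phi>) = prop_bound \<phi>"
| "prop_bound (Until \<phi> \<psi>) = max (prop_bound \<phi>) (prop_bound \<psi>)"

lemma subformulas_refl [simp]: "\<phi> \<in> subformulas \<phi>"
  by (cases \<phi>) auto

lemma subformulas_trans:
  "\<chi> \<in> subformulas \<psi> \<Longrightarrow> \<psi> \<in> subformulas \<phi> \<Longrightarrow> \<chi> \<in> subformulas \<phi>"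
  by (induction \<phi>) auto

lemma standpoints_subformula: "\<psi> \<in> subformulas \<phi> \<Longrightarrow> standpoints \<psi> \<subseteq> standpoints \<phi>"
  by (induction \<phi>) auto

lemma prop_bound_subformula: "\<psi> \<in> subformulas \<phi> \<Longrightarrow> prop_bound \<psi> \<le> prop_bound \<phi>"
  by (induction \<phi>) auto

lemma finite_subformulas [simp]: "finite (subformulas \<phi>)"
  by (induction \<phi>) auto

lemma finite_standpoints [simp]: "finite (standpoints \<phi>)"
  by (induction \<phi>) auto

lemma card_subformulas_le: "card (subformulas \<phi>) \<le> fsize \<phi>"
proof (induction \<phi>)
  case (Conj \<phi> \<psi>)
  then show ?case
    using card_Un_le[of "subformulas \<phi>" "subformulas \<psi>"] by (simp add: card_insert_if)
next
  case (Until \<phi> \<psi>)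
  then show ?case
    using card_Un_le[of "subformulas \<phi>" "subformulas \<psi>"] by (simp add: card_insert_if)
qed (auto simp: card_insert_if)

lemma card_standpoints_le: "card (standpoints \<phi>) \<le> 2 * fsize \<phi>"
proof (induction \<phi>)
  case (Conj \<phi> \<psi>)
  then show ?case using card_Un_le[of "standpoints \<phi>" "standpoints \<psi>"] by simp
next
  case (Until \<phi> \<psi>)
  then show ?case using card_Un_le[of "standpoints \<phi>" "standpoints \<psi>"] by simp
qed (auto simp: card_insert_if)

instance stp :: countable by countable_datatype
instance sltl :: countable by countable_datatype

locale sltl_pointed_model =
  fixes \<phi> :: sltl and \<Pi> :: "trace set" and lam :: "stp \<Rightarrow> trace set" and \<sigma> :: trace
  assumes model: "sltl_model \<Pi> lam" and \<sigma>_in: "\<sigma> \<in> \<Pi>"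
begin

lemma lam_nonempty: "lam s \<noteq> {}" and lam_subset: "lam s \<subseteq> \<Pi>" and lam_Star: "lam Star = \<Pi>"
  using model unfolding sltl_model_def by auto

definition relevant :: "stp set" where
  "relevant = insert Star (standpoints \<phi>)"

definition requests :: "(stp \<times> sltl \<times> bool) set" where
  "requests = relevant \<times> subformulas \<phi> \<times> UNIV"

lemma finite_requests: "finite requests"
  by (simp add: requests_def relevant_def)

definition indices :: "(stp \<times> sltl \<times> bool) option set" where
  "indices = insert None (Some ` requests)"

definition origin :: "(stp \<times> sltl \<times> bool) option \<Rightarrow> stp" where
  "origin x = (case x of None \<Rightarrow> Star | Some (s, _, _) \<Rightarrow> s)"

definition source :: "(stp \<times> sltl \<times> bool) option \<Rightarrow> nat \<Rightarrow> trace" where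
  "source x i = (case x of
      None \<Rightarrow> \<sigma>
    | Some (s, \<psi>, b) \<Rightarrow> SOME \<pi>. \<pi> \<in> lam s \<and>
        ((\<exists>\<pi>'\<in>lam s. sat \<Pi> lam \<pi>' i \<psi> = b) \<longrightarrow> sat \<Pi> lam \<pi> i \<psi> = b))"

(* Only the propositions of \<phi> are copied, so that the tag prop_bound \<phi> + to_nat x,
   invisible to \<phi>, keeps the new traces distinct. *)
definition new_trace :: "(stp \<times> sltl \<times> bool) option \<Rightarrow> trace" where
  "new_trace x i = source x i i \<inter> {..<prop_bound \<phi>} \<union> {prop_bound \<phi> + to_nat x}"

definition \<Pi>' :: "trace set" where
  "\<Pi>' = new_trace ` indices"

definition lam' :: "stp \<Rightarrow> trace set" where
  "lam' s = (if s \<in> relevant then new_trace ` {x \<in> indices. lam (origin x) \<subseteq> lam s} else \<Pi>')"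

lemma source_in_lam: "source x i \<in> lam (origin x)"
proof (cases x)
  case None
  then show ?thesis using \<sigma>_in lam_Star by (simp add: source_def origin_def)
next
  case (Some r)
  obtain s \<psi> b where r: "r = (s, \<psi>, b)" by (cases r) auto
  have "\<exists>\<pi>. \<pi> \<in> lam s \<and> ((\<exists>\<pi>'\<in>lam s. sat \<Pi> lam \<pi>' i \<psi> = b) \<longrightarrow> sat \<Pi> lam \<pi> i \<psi> = b)"
    using lam_nonempty by blast
  from someI_ex[OF this] show ?thesis by (simp add: Some r source_def origin_def)
qed

lemma source_sat:
  assumes "\<pi> \<in> lam s" "sat \<Pi> lam \<pi> i \<psi> = b"
  shows "sat \<Pi> lam (source (Some (s, \<psi>, b)) i) i \<psi> = b"
proof -
  have source: "source (Some (s, \<psi>, b)) i = (SOME \<pi>. \<pi> \<in> lam s \<and>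
      ((\<exists>\<pi>'\<in>lam s. sat \<Pi> lam \<pi>' i \<psi> = b) \<longrightarrow> sat \<Pi> lam \<pi> i \<psi> = b))"
    unfolding source_def by simp
  have "\<exists>\<pi>. \<pi> \<in> lam s \<and> ((\<exists>\<pi>'\<in>lam s. sat \<Pi> lam \<pi>' i \<psi> = b) \<longrightarrow> sat \<Pi> lam \<pi> i \<psi> = b)"
    using assms by blast
  from someI_ex[OF this] show ?thesis using assms unfolding source by blast
qed

lemma new_trace_agrees: "new_trace x i \<inter> {..<prop_bound \<phi>} = source x i i \<inter> {..<prop_bound \<phi>}"
  by (auto simp: new_trace_def)

lemma inj_new_trace: "inj new_trace"
proof
  fix x y assume "new_trace x = new_trace y"
  moreover have "prop_bound \<phi> + to_nat x \<in> new_trace x 0" by (simp add: new_trace_def)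
  ultimately have "prop_bound \<phi> + to_nat x \<in> new_trace y 0" by simp
  then show "x = y" by (auto simp: new_trace_def)
qed

lemma new_trace_in_lam':
  assumes "s \<in> relevant" "x \<in> indices"
  shows "new_trace x \<in> lam' s \<longleftrightarrow> lam (origin x) \<subseteq> lam s"
  using assms inj_new_trace by (auto simp: lam'_def dest: injD)

lemma request_in_lam':
  assumes "s \<in> relevant" "\<psi> \<in> subformulas \<phi>"
  shows "Some (s, \<psi>, b) \<in> indices" "new_trace (Some (s, \<psi>, b)) \<in> lam' s"
  using assms by (auto simp: indices_def requests_def new_trace_in_lam' origin_def)

lemma lam'_subset_iff:
  assumes "s \<in> relevant" "s' \<in> relevant"
  shows "lam' s \<subseteq> lam' s' \<longleftrightarrow> lam s \<subseteq> lam s'"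
proof
  assume "lam' s \<subseteq> lam' s'"
  then have "new_trace (Some (s, \<phi>, True)) \<in> lam' s'"
    using request_in_lam'[OF assms(1)] by auto
  then show "lam s \<subseteq> lam s'"
    using request_in_lam'[OF assms(1)] by (simp add: new_trace_in_lam'[OF assms(2)] origin_def)
qed (use assms in \<open>auto simp: lam'_def\<close>)

lemma lam'_realises_iff:
  assumes "s \<in> relevant" "\<psi> \<in> subformulas \<phi>"
    and IH: "\<And>x. sat \<Pi>' lam' (new_trace x) i \<psi> = sat \<Pi> lam (source x i) i \<psi>"
  shows "(\<exists>\<rho>\<in>lam' s. sat \<Pi>' lam' \<rho> i \<psi> = b) \<longleftrightarrow> (\<exists>\<pi>\<in>lam s. sat \<Pi> lam \<pi> i \<psi> = b)"
proof
  assume "\<exists>\<rho>\<in>lam' s. sat \<Pi>' lam' \<rho> i \<psi> = b"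
  then obtain x where "lam (origin x) \<subseteq> lam s" "sat \<Pi>' lam' (new_trace x) i \<psi> = b"
    using assms(1) by (auto simp: lam'_def)
  then show "\<exists>\<pi>\<in>lam s. sat \<Pi> lam \<pi> i \<psi> = b"
    using source_in_lam IH by blast
next
  assume "\<exists>\<pi>\<in>lam s. sat \<Pi> lam \<pi> i \<psi> = b"
  then have "sat \<Pi>' lam' (new_trace (Some (s, \<psi>, b))) i \<psi> = b"
    using source_sat IH by blast
  then show "\<exists>\<rho>\<in>lam' s. sat \<Pi>' lam' \<rho> i \<psi> = b"
    using request_in_lam'[OF assms(1,2)] by blast
qed

lemma relevant_subformula:
  "Sharper s s' \<in> subformulas \<phi> \<Longrightarrow> s \<in> relevant \<and> s' \<in> relevant"
  "Dia s \<psi> \<in> subformulas \<phi> \<Longrightarrow> s \<in> relevant"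
  "Box s \<psi> \<in> subformulas \<phi> \<Longrightarrow> s \<in> relevant"
  using standpoints_subformula by (fastforce simp: relevant_def)+

lemma sat_temporal_free:
  assumes "\<psi> \<in> subformulas \<phi>" "temporal_free \<psi>"
    and "\<rho>' i \<inter> {..<prop_bound \<phi>} = \<rho> i \<inter> {..<prop_bound \<phi>}"
  shows "sat \<Pi>' lam' \<rho>' i \<psi> = sat \<Pi> lam \<rho> i \<psi>"
  using assms
proof (induction \<psi> arbitrary: \<rho> \<rho>')
  case (Prop p)
  then have "p < prop_bound \<phi>" using prop_bound_subformula by fastforce
  then show ?case using Prop.prems(3) by auto
next
  case (Sharper s s')
  then show ?case using relevant_subformula(1) lam'_subset_iff by simp
next
  case (Neg \<psi>)
  then show ?case using subformulas_trans[OF _ Neg.prems(1)] by simp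
next
  case (Conj \<psi> \<chi>)
  then show ?case using subformulas_trans[OF _ Conj.prems(1)] by simp
next
  case (Dia s \<psi>)
  have "\<psi> \<in> subformulas \<phi>" using subformulas_trans[OF _ Dia.prems(1)] by simp
  moreover have "sat \<Pi>' lam' (new_trace x) i \<psi> = sat \<Pi> lam (source x i) i \<psi>" for x
    using Dia.IH[where \<rho>' = "new_trace x" and \<rho> = "source x i"] Dia.prems(2)
      \<open>\<psi> \<in> subformulas \<phi>\<close> new_trace_agrees by simp
  ultimately show ?case
    using lam'_realises_iff[OF relevant_subformula(2)[OF Dia.prems(1)], where b = True] by simp
next
  case (Box s \<psi>)
  have "\<psi> \<in> subformulas \<phi>" using subformulas_trans[OF _ Box.prems(1)] by simp
  moreover have "sat \<Pi>' lam' (new_trace x) i \<psi> = sat \<Pi> lam (source x i) i \<psi>" for x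
    using Box.IH[where \<rho>' = "new_trace x" and \<rho> = "source x i"] Box.prems(2)
      \<open>\<psi> \<in> subformulas \<phi>\<close> new_trace_agrees by simp
  ultimately have "(\<exists>\<rho>\<in>lam' s. \<not> sat \<Pi>' lam' \<rho> i \<psi>) \<longleftrightarrow> (\<exists>\<pi>\<in>lam s. \<not> sat \<Pi> lam \<pi> i \<psi>)"
    using lam'_realises_iff[OF relevant_subformula(3)[OF Box.prems(1)], where b = False] by simp
  then show ?case by auto
qed simp_all

lemma sat_ltl_psl:
  assumes "\<psi> \<in> subformulas \<phi>" "ltl_psl \<psi>"
  shows "sat \<Pi>' lam' (new_trace None) i \<psi> = sat \<Pi> lam \<sigma> i \<psi>"
  using assms
proof (induction \<psi> arbitrary: i)
  case (Prop p)
  then have "p < prop_bound \<phi>" using prop_bound_subformula by fastforce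
  then show ?case by (simp add: new_trace_def source_def)
next
  case (Sharper s s')
  then show ?case using relevant_subformula(1) lam'_subset_iff by simp
next
  case (Neg \<psi>)
  then show ?case using subformulas_trans[OF _ Neg.prems(1)] by simp
next
  case (Conj \<psi> \<chi>)
  then show ?case using subformulas_trans[OF _ Conj.prems(1)] by simp
next
  case (Dia s \<psi>)
  then show ?case
    using sat_temporal_free[of "Dia s \<psi>"] new_trace_agrees[of None] by (simp add: source_def)
next
  case (Box s \<psi>)
  then show ?case
    using sat_temporal_free[of "Box s \<psi>"] new_trace_agrees[of None] by (simp add: source_def)
next
  case (Next \<psi>)
  then show ?case using subformulas_trans[OF _ Next.prems(1)] by simp
next
  case (Until \<psi> \<chi>)
  then show ?case using subformulas_trans[OF _ Until.prems(1)] by simp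
qed

lemma sltl_model_new: "sltl_model \<Pi>' lam'"
  unfolding sltl_model_def
proof (intro conjI allI)
  fix s
  show "lam' s \<subseteq> \<Pi>'" by (auto simp: lam'_def \<Pi>'_def)
  show "lam' s \<noteq> {}"
  proof (cases "s \<in> relevant")
    case True
    then show ?thesis using request_in_lam'(2)[OF True subformulas_refl] by blast
  qed (simp add: lam'_def \<Pi>'_def indices_def)
next
  have "lam (origin x) \<subseteq> lam Star" for x using lam_subset lam_Star by simp
  then show "lam' Star = \<Pi>'" by (simp add: lam'_def \<Pi>'_def relevant_def)
qed (simp add: \<Pi>'_def indices_def)

lemma card_new_le: "card \<Pi>' \<le> 2 * (2 * fsize \<phi> + 1) * fsize \<phi> + 1"
proof -
  have "card relevant \<le> 2 * fsize \<phi> + 1"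
    using card_standpoints_le[of \<phi>] by (simp add: relevant_def card_insert_if)
  then have "card requests \<le> (2 * fsize \<phi> + 1) * (fsize \<phi> * 2)"
    unfolding requests_def card_cartesian_product card_UNIV_bool
    using card_subformulas_le[of \<phi>] by (intro mult_le_mono) auto
  moreover have "card \<Pi>' \<le> card indices"
    unfolding \<Pi>'_def by (rule card_image_le) (simp add: indices_def finite_requests)
  moreover have "card indices = Suc (card requests)"
    unfolding indices_def by (simp add: card_image finite_requests)
  ultimately show ?thesis by (simp add: algebra_simps)
qed

end

lemma ltl_psl_small_model:
  assumes "ltl_psl \<phi>" "sltl_model \<Pi> lam" "\<sigma> \<in> \<Pi>" "sat \<Pi> lam \<sigma> 0 \<phi>"
  shows "\<exists>\<Pi>' lam' \<sigma>'. sltl_model \<Pi>' lam' \<and> finite \<Pi>'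
           \<and> card \<Pi>' \<le> 2 * (2 * fsize \<phi> + 1) * fsize \<phi> + 1 \<and> \<sigma>' \<in> \<Pi>' \<and> sat \<Pi>' lam' \<sigma>' 0 \<phi>"
proof -
  interpret sltl_pointed_model \<phi> \<Pi> lam \<sigma>
    using assms(2,3) by unfold_locales
  have "new_trace None \<in> \<Pi>'" "finite \<Pi>'"
    by (simp_all add: \<Pi>'_def indices_def finite_requests)
  moreover have "sat \<Pi>' lam' (new_trace None) 0 \<phi>"
    using sat_ltl_psl[OF subformulas_refl assms(1)] assms(4) by simp
  ultimately show ?thesis using sltl_model_new card_new_le by blast
qed

theorem corollary3:
  shows "\<exists>f :: nat poly. \<forall>\<phi>. ltl_psl \<phi> \<and> satisfiable \<phi> \<longrightarrow>
           (\<exists>\<Pi> lam \<sigma>. sltl_model \<Pi> lam \<and> finite \<Pi> \<and> card \<Pi> \<le> poly f (fsize \<phi>)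
              \<and> \<sigma> \<in> \<Pi> \<and> sat \<Pi> lam \<sigma> 0 \<phi>)"
proof -
  have "poly [:1, 2, 4:] n = 2 * (2 * n + 1) * n + 1" for n :: nat
    by (simp add: algebra_simps)
  then show ?thesis
    unfolding satisfiable_def using ltl_psl_small_model by (intro exI[of _ "[:1, 2, 4:]"]) metis
qed

end
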